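(* Let $F$ be a finite-precision CDF and $S$ a finite-precision survival function over a binary number format $\mathcal{B}=(n,\gamma_{\mathcal{B}},\phi_{\mathcal{B}})$, both with values in $\mathbb{F}^E_m\cap[0,1]$. Let $b^*:=\min_{<_{\mathcal{B}}}\{b\in\{0,1\}^n: F(b)\ge \mathrm{succ}(1/2)\}$, where $\mathrm{succ}(1/2)$ is the smallest element of $\mathbb{F}^E_m$ greater than $1/2$, and suppose $S(b^* )<1/2$. Define $G(b):=(0,F(b))$ if $b<_{\mathcal{B}}b^*$ and $G(b):=(1,S(b))$ if $b\ge_{\mathcal{B}}b^*$. Then $G$ is a finite-precision dual distribution function over $\mathcal{B}$.
   Context: $\overline{\mathbb{R}}=\mathbb{R}\cup\{-\infty,+\infty,\bot\}$ is totally ordered by $-\infty<$ reals $<+\infty<\bot$. A binary number format $\mathcal{B}=(n,\gamma_{\mathcal{B}},\phi_{\mathcal{B}})$ consists of $n\ge1$, $\gamma_{\mathcal{B}}:\{0,1\}^n\to\overline{\mathbb{R}}$, and a bijection $\phi_{\mathcal{B}}$ of $\{0,1\}^n$ with $b<_{\mathrm{dict}}b'\Rightarrow\gamma_{\mathcal{B}}(\phi_{\mathcal{B}}(b))\le\gamma_{\mathcal{B}}(\phi_{\mathcal{B}}(b'))$; it induces the linear order $b<_{\mathcal{B}}b'$ iff $\phi_{\mathcal{B}}^{-1}(b)<_{\mathrm{dict}}\phi_{\mathcal{B}}^{-1}(b')$. $\mathbb{F}^E_m$ is the set of floating-point numbers with $E$ exponent and $m$ mantissa bits. A finite-precision CDF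 over $\mathcal{B}$ is $F:\{0,1\}^n\to\mathbb{F}^E_m\cap[0,1]$ with $F(\phi_{\mathcal{B}}(1^n))=1$ and $b<_{\mathcal{B}}b'\Rightarrow F(b)\le F(b')$. A finite-precision survival function over $\mathcal{B}$ is $S:\{0,1\}^n\to\mathbb{F}^E_m\cap[0,1]$ with $S(\phi_{\mathcal{B}}(1^n))=0$ and $b<_{\mathcal{B}}b'\Rightarrow S(b')\le S(b)$. A finite-precision dual distribution function (DDF) over $\mathcal{B}$ is a map $G:\{0,1\}^n\to\{0,1\}\times(\mathbb{F}^E_m\cap[0,1/2])$ such that, with $G^*(b):=(1-d)f+d(1-f)$ for $(d,f)=G(b)$, we have $G^*(\phi_{\mathcal{B}}(1^n))=1$ and $b<_{\mathcal{B}}b'\Rightarrow G^*(b)\le G^*(b')$. *)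

theory Defs
  imports Complex_Main
begin

datatype xreal = MInf | Fin real | PInf | Bot

fun xle :: "xreal \<Rightarrow> xreal \<Rightarrow> bool" where
  "xle MInf _ = True"
| "xle (Fin x) MInf = False"
| "xle (Fin x) (Fin y) = (x \<le> y)"
| "xle (Fin x) PInf = True"
| "xle (Fin x) Bot = True"
| "xle PInf MInf = False"
| "xle PInf (Fin y) = False"
| "xle PInf PInf = True"
| "xle PInf Bot = True"
| "xle Bot y = (y = Bot)"

text \<open>{0,1}^n as boolean lists of length n, with False = 0, True = 1.\<close>

definition bits :: "nat \<Rightarrow> bool list set" where
  "bits n = {b. length b = n}"

definition dict_less :: "bool list \<Rightarrow> bool list \<Rightarrow> bool" where
  "dict_less b b' \<longleftrightarrow> (b, b') \<in> lexord {(x, y). x < y}"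

definition binary_number_format ::
  "nat \<Rightarrow> (bool list \<Rightarrow> xreal) \<Rightarrow> (bool list \<Rightarrow> bool list) \<Rightarrow> bool" where
  "binary_number_format n \<gamma> \<phi> \<longleftrightarrow>
     n \<ge> 1 \<and> bij_betw \<phi> (bits n) (bits n) \<and>
     (\<forall>b\<in>bits n. \<forall>b'\<in>bits n. dict_less b b' \<longrightarrow> xle (\<gamma> (\<phi> b)) (\<gamma> (\<phi> b')))"

definition fmt_less :: "nat \<Rightarrow> (bool list \<Rightarrow> bool list) \<Rightarrow> bool list \<Rightarrow> bool list \<Rightarrow> bool" where
  "fmt_less n \<phi> b b' \<longleftrightarrow> dict_less (inv_into (bits n) \<phi> b) (inv_into (bits n) \<phi> b')"

definition fmt_top :: "nat \<Rightarrow> (bool list \<Rightarrow> bool list) \<Rightarrow> bool list" where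
  "fmt_top n \<phi> = \<phi> (replicate n True)"

text \<open>Only the (finite) real values matter here.\<close>

definition fp_bias :: "nat \<Rightarrow> int" where
  "fp_bias E = 2 ^ (E - 1) - 1"

definition fp_set :: "nat \<Rightarrow> nat \<Rightarrow> real set" where
  "fp_set E m =
     {(-1) ^ s * (1 + real k / 2 ^ m) * 2 powi (e - fp_bias E) | s k e.
        s < (2::nat) \<and> k < 2 ^ m \<and> 1 \<le> e \<and> e \<le> 2 ^ E - 2}
   \<union> {(-1) ^ s * (real k / 2 ^ m) * 2 powi (1 - fp_bias E) | s k.
        s < (2::nat) \<and> k < 2 ^ m}"

definition fp_succ :: "nat \<Rightarrow> nat \<Rightarrow> real \<Rightarrow> real" where
  "fp_succ E m x = (LEAST y. y \<in> fp_set E m \<and> x < y)"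

definition fp_cdf :: "nat \<Rightarrow> nat \<Rightarrow> nat \<Rightarrow> (bool list \<Rightarrow> bool list) \<Rightarrow> (bool list \<Rightarrow> real) \<Rightarrow> bool" where
  "fp_cdf E m n \<phi> F \<longleftrightarrow>
     (\<forall>b\<in>bits n. F b \<in> fp_set E m \<and> 0 \<le> F b \<and> F b \<le> 1) \<and>
     F (fmt_top n \<phi>) = 1 \<and>
     (\<forall>b\<in>bits n. \<forall>b'\<in>bits n. fmt_less n \<phi> b b' \<longrightarrow> F b \<le> F b')"

definition fp_survival :: "nat \<Rightarrow> nat \<Rightarrow> nat \<Rightarrow> (bool list \<Rightarrow> bool list) \<Rightarrow> (bool list \<Rightarrow> real) \<Rightarrow> bool" where
  "fp_survival E m n \<phi> S \<longleftrightarrow>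
     (\<forall>b\<in>bits n. S b \<in> fp_set E m \<and> 0 \<le> S b \<and> S b \<le> 1) \<and>
     S (fmt_top n \<phi>) = 0 \<and>
     (\<forall>b\<in>bits n. \<forall>b'\<in>bits n. fmt_less n \<phi> b b' \<longrightarrow> S b' \<le> S b)"

text \<open>The bit d \<in> {0,1} is encoded as a bool (True = 1).\<close>

definition ddf_star :: "bool \<times> real \<Rightarrow> real" where
  "ddf_star p = (1 - of_bool (fst p)) * snd p + of_bool (fst p) * (1 - snd p)"

definition fp_ddf :: "nat \<Rightarrow> nat \<Rightarrow> nat \<Rightarrow> (bool list \<Rightarrow> bool list) \<Rightarrow> (bool list \<Rightarrow> bool \<times> real) \<Rightarrow> bool" where
  "fp_ddf E m n \<phi> G \<longleftrightarrow>
     (\<forall>b\<in>bits n. snd (G b) \<in> fp_set E m \<and> 0 \<le> snd (G b) \<and> snd (G b) \<le> 1/2) \<and>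
     ddf_star (G (fmt_top n \<phi>)) = 1 \<and>
     (\<forall>b\<in>bits n. \<forall>b'\<in>bits n. fmt_less n \<phi> b b' \<longrightarrow> ddf_star (G b) \<le> ddf_star (G b'))"

end

theory Submission
  imports Defs
begin

text \<open>Below \<open>b\<^sup>*\<close> the CDF takes floating-point values smaller than \<open>succ(1/2)\<close>, hence at most
  \<open>1/2\<close>; from \<open>b\<^sup>*\<close> on the survival function is at most \<open>S(b\<^sup>*) < 1/2\<close>. So \<open>G\<^sup>*\<close> equals
  the monotone \<open>F \<le> 1/2\<close> on a down-closed initial segment and the monotone \<open>1 - S \<ge> 1/2\<close> on the
  rest, which makes it monotone as a whole.\<close>

lemma finite_fp_set: "finite (fp_set E m)"
proof -
  let ?normal = "(\<lambda>(s::nat, k::nat, e::int). (-1::real) ^ s * (1 + real k / 2 ^ m) * 2 powi (e - fp_bias E))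
      ` ({..<2} \<times> {..<2 ^ m} \<times> {1..2 ^ E - 2})"
  let ?subnormal = "(\<lambda>(s::nat, k::nat). (-1::real) ^ s * (real k / 2 ^ m) * 2 powi (1 - fp_bias E))
      ` ({..<2} \<times> {..<2 ^ m})"
  have "fp_set E m \<subseteq> ?normal \<union> ?subnormal"
  proof
    fix x assume "x \<in> fp_set E m"
    then consider (normal) s k e
        where "x = (-1) ^ s * (1 + real k / 2 ^ m) * 2 powi (e - fp_bias E)"
          "s < (2::nat)" "k < (2::nat) ^ m" "1 \<le> e" "e \<le> 2 ^ E - 2"
      | (subnormal) s k where "x = (-1) ^ s * (real k / 2 ^ m) * 2 powi (1 - fp_bias E)"
          "s < (2::nat)" "k < (2::nat) ^ m"
      unfolding fp_set_def by blast
    then show "x \<in> ?normal \<union> ?subnormal"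
    proof cases
      case normal
      then have "x \<in> ?normal" by (intro rev_image_eqI[of "(s, k, e)"]) auto
      then show ?thesis ..
    next
      case subnormal
      then have "x \<in> ?subnormal" by (intro rev_image_eqI[of "(s, k)"]) auto
      then show ?thesis ..
    qed
  qed
  then show ?thesis by (rule finite_subset) simp
qed

lemma fp_le_of_less_fp_succ:
  assumes "y \<in> fp_set E m" and "y < fp_succ E m x"
  shows "y \<le> x"
proof (rule ccontr)
  assume "\<not> y \<le> x"
  then have "y \<in> {z. z \<in> fp_set E m \<and> x < z}" using assms(1) by simp
  moreover have fin: "finite {z. z \<in> fp_set E m \<and> x < z}" using finite_fp_set by simp
  moreover have "fp_succ E m x = Min {z. z \<in> fp_set E m \<and> x < z}"
    unfolding fp_succ_def using Least_Min[OF fin] calculation(1) by blast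
  ultimately have "fp_succ E m x \<le> y" by simp
  then show False using assms(2) by simp
qed

lemma dict_less_trans:
  assumes "dict_less a b" and "dict_less b c"
  shows "dict_less a c"
proof -
  have "trans {(x::bool, y). x < y}" by (auto simp: trans_def)
  then show ?thesis using assms unfolding dict_less_def by (blast intro: lexord_trans)
qed

lemma dict_less_linear:
  assumes "length a = length b"
  shows "dict_less a b \<or> a = b \<or> dict_less b a"
proof -
  have "\<forall>x y. (x, y) \<in> {(x::bool, y). x < y} \<or> x = y \<or> (y, x) \<in> {(x::bool, y). x < y}"
    by auto
  from lexord_linear[OF this] show ?thesis unfolding dict_less_def by blast
qed

lemma fmt_less_trans: "fmt_less n \<phi> a b \<Longrightarrow> fmt_less n \<phi> b c \<Longrightarrow> fmt_less n \<phi> a c"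
  unfolding fmt_less_def by (rule dict_less_trans)

lemma fmt_less_linear:
  assumes "bij_betw \<phi> (bits n) (bits n)" and "a \<in> bits n" and "b \<in> bits n"
  shows "fmt_less n \<phi> a b \<or> a = b \<or> fmt_less n \<phi> b a"
proof -
  have inv_bij: "bij_betw (inv_into (bits n) \<phi>) (bits n) (bits n)"
    using assms(1) by (rule bij_betw_inv_into)
  then have "length (inv_into (bits n) \<phi> a) = length (inv_into (bits n) \<phi> b)"
    using assms(2,3) bij_betw_apply by (fastforce simp: bits_def)
  moreover have "inv_into (bits n) \<phi> a = inv_into (bits n) \<phi> b \<Longrightarrow> a = b"
    using inv_bij assms(2,3) by (meson bij_betw_imp_inj_on inj_onD)
  ultimately show ?thesis unfolding fmt_less_def using dict_less_linear by blast
qed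

lemma fmt_top_in_bits:
  assumes "bij_betw \<phi> (bits n) (bits n)"
  shows "fmt_top n \<phi> \<in> bits n"
  unfolding fmt_top_def using assms bij_betw_apply by (fastforce simp: bits_def)

lemma fp_ddf_glue_cdf_survival:
  assumes F: "fp_cdf E m n \<phi> F" and S: "fp_survival E m n \<phi> S"
    and top_in: "fmt_top n \<phi> \<in> bits n"
    and down_closed: "\<And>b b'. b \<in> bits n \<Longrightarrow> b' \<in> bits n \<Longrightarrow> fmt_less n \<phi> b b' \<Longrightarrow> L b' \<Longrightarrow> L b"
    and F_low: "\<And>b. b \<in> bits n \<Longrightarrow> L b \<Longrightarrow> F b \<le> 1/2"
    and S_low: "\<And>b. b \<in> bits n \<Longrightarrow> \<not> L b \<Longrightarrow> S b \<le> 1/2"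
  shows "fp_ddf E m n \<phi> (\<lambda>b. if L b then (False, F b) else (True, S b))"
proof -
  have F_range: "\<And>b. b \<in> bits n \<Longrightarrow> F b \<in> fp_set E m \<and> 0 \<le> F b"
    and F_top: "F (fmt_top n \<phi>) = 1"
    and F_mono: "\<And>b b'. b \<in> bits n \<Longrightarrow> b' \<in> bits n \<Longrightarrow> fmt_less n \<phi> b b' \<Longrightarrow> F b \<le> F b'"
    using F unfolding fp_cdf_def by auto
  have S_range: "\<And>b. b \<in> bits n \<Longrightarrow> S b \<in> fp_set E m \<and> 0 \<le> S b"
    and S_top: "S (fmt_top n \<phi>) = 0"
    and S_anti: "\<And>b b'. b \<in> bits n \<Longrightarrow> b' \<in> bits n \<Longrightarrow> fmt_less n \<phi> b b' \<Longrightarrow> S b' \<le> S b"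
    using S unfolding fp_survival_def by auto
  have "\<not> L (fmt_top n \<phi>)" using F_low[OF top_in] F_top by auto
  moreover have "ddf_star (if L b then (False, F b) else (True, S b))
      \<le> ddf_star (if L b' then (False, F b') else (True, S b'))"
    if b: "b \<in> bits n" and b': "b' \<in> bits n" and less: "fmt_less n \<phi> b b'" for b b'
    using down_closed[OF b b' less] F_mono[OF b b' less] S_anti[OF b b' less] F_low[OF b] S_low[OF b']
    by (auto simp: ddf_star_def)
  ultimately show ?thesis
    unfolding fp_ddf_def using F_range S_range F_low S_low S_top by (simp add: ddf_star_def)
qed

theorem theorem6p3:
  fixes E m n :: nat
    and \<gamma> :: "bool list \<Rightarrow> xreal"
    and \<phi> :: "bool list \<Rightarrow> bool list"
    and F S :: "bool list \<Rightarrow> real"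
    and bstar :: "bool list"
  assumes fmt: "binary_number_format n \<gamma> \<phi>"
    and F: "fp_cdf E m n \<phi> F"
    and S: "fp_survival E m n \<phi> S"
    and bstar_in: "bstar \<in> bits n"
    and bstar_ge: "F bstar \<ge> fp_succ E m (1/2)"
    and bstar_min: "\<forall>b\<in>bits n. F b \<ge> fp_succ E m (1/2) \<longrightarrow> \<not> fmt_less n \<phi> b bstar"
    and S_bstar: "S bstar < 1/2"
  shows "fp_ddf E m n \<phi>
           (\<lambda>b. if fmt_less n \<phi> b bstar then (False, F b) else (True, S b))"
proof (rule fp_ddf_glue_cdf_survival[OF F S])
  have bij: "bij_betw \<phi> (bits n) (bits n)" using fmt unfolding binary_number_format_def by blast
  then show "fmt_top n \<phi> \<in> bits n" by (rule fmt_top_in_bits)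
  show "fmt_less n \<phi> b bstar" if "fmt_less n \<phi> b b'" "fmt_less n \<phi> b' bstar" for b b'
    using that by (rule fmt_less_trans)
  show "F b \<le> 1/2" if b: "b \<in> bits n" and below: "fmt_less n \<phi> b bstar" for b
  proof (rule fp_le_of_less_fp_succ)
    show "F b \<in> fp_set E m" using F b unfolding fp_cdf_def by blast
    show "F b < fp_succ E m (1/2)" using bstar_min b below by force
  qed
  show "S b \<le> 1/2" if b: "b \<in> bits n" and not_below: "\<not> fmt_less n \<phi> b bstar" for b
  proof -
    have "b = bstar \<or> fmt_less n \<phi> bstar b"
      using fmt_less_linear[OF bij b bstar_in] not_below by blast
    then have "S b \<le> S bstar" using S b bstar_in unfolding fp_survival_def by auto
    then show ?thesis using S_bstar by simp
  qed
qed

end
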